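(* Let $m_1,m_2\geq1$, $m=m_1+m_2$, $j=\mathrm{diag}(I_{m_1},-I_{m_2})$, $n\in\mathbb{N}$, and let $\{A,S_0,\Pi_0\}$ be an admissible triple. Define $\Pi_k,S_k$ $(k\geq0)$ by the recursions $\Pi_{k+1}=\Pi_k+\mathrm{i} A^{-1}\Pi_k j$, $S_{k+1}=S_k+A^{-1}S_k(A^* )^{-1}+A^{-1}\Pi_k\Pi_k^*(A^* )^{-1}$. Then all $S_k$ are invertible, so that the matrices $C_k:=I_m+\Pi_k^*S_k^{-1}\Pi_k-\Pi_{k+1}^*S_{k+1}^{-1}\Pi_{k+1}$ are well defined, and they satisfy $C_k>0$ and $C_kjC_k=j$ for all $k\geq 0$. Moreover, the fundamental solution $\{W_k\}$ of the Dirac system $y_{k+1}(z)=(I_m+\mathrm{i} zjC_k)y_k(z)$ admits the representation $$W_k(z)=w_A(k,-1/z)\,(I_m+\mathrm{i} zj)^k\,w_A(0,-1/z)^{-1}\qquad(k\geq0),$$ where $w_A(k,\lambda):=I_m-\mathrm{i} j\Pi_k^*S_k^{-1}(A-\lambda I_n)^{-1}\Pi_k$ (for those $z\neq0$ at which the right-hand side is defined).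
   Context: A triple $\{A,S_0,\Pi_0\}$ is called admissible if $A$ is an invertible $n\times n$ matrix, $S_0$ is a positive definite $n\times n$ matrix, $\Pi_0$ is an $n\times m$ matrix, and $AS_0-S_0A^*=\mathrm{i}\Pi_0j\Pi_0^*$. The fundamental solution is defined by $W_0(z)=I_m$, $W_{k+1}(z)=(I_m+\mathrm{i} zjC_k)W_k(z)$. *)

theory Defs
  imports "Jordan_Normal_Form.Schur_Decomposition"
begin

abbreviation adj :: "complex mat \<Rightarrow> complex mat" where
  "adj A \<equiv> mat_adjoint A"

definition minv :: "complex mat \<Rightarrow> complex mat" where
  "minv A = (SOME B. inverts_mat A B \<and> inverts_mat B A)"

definition pos_def_mat :: "nat \<Rightarrow> complex mat \<Rightarrow> bool" where
  "pos_def_mat n S \<longleftrightarrow> S \<in> carrier_mat n n \<and> adj S = S \<and>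
     (\<forall>v \<in> carrier_vec n. v \<noteq> 0\<^sub>v n \<longrightarrow>
        Im ((S *\<^sub>v v) \<bullet>c v) = 0 \<and> Re ((S *\<^sub>v v) \<bullet>c v) > 0)"

definition jmat :: "nat \<Rightarrow> nat \<Rightarrow> complex mat" where
  "jmat m1 m2 = mat (m1 + m2) (m1 + m2)
     (\<lambda>(a, b). if a = b then (if a < m1 then 1 else -1) else 0)"

definition admissible :: "nat \<Rightarrow> nat \<Rightarrow> complex mat \<Rightarrow> complex mat \<Rightarrow> complex mat \<Rightarrow> complex mat \<Rightarrow> bool" where
  "admissible n m j A S0 Pi0 \<longleftrightarrow>
     A \<in> carrier_mat n n \<and> invertible_mat A \<and> pos_def_mat n S0 \<and> Pi0 \<in> carrier_mat n m \<and>
     A * S0 - S0 * adj A = \<i> \<cdot>\<^sub>m (Pi0 * j * adj Pi0)"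

fun Pik :: "complex mat \<Rightarrow> complex mat \<Rightarrow> complex mat \<Rightarrow> nat \<Rightarrow> complex mat" where
  "Pik j A Pi0 0 = Pi0"
| "Pik j A Pi0 (Suc k) = Pik j A Pi0 k + \<i> \<cdot>\<^sub>m (minv A * Pik j A Pi0 k * j)"

fun Sk :: "complex mat \<Rightarrow> complex mat \<Rightarrow> complex mat \<Rightarrow> complex mat \<Rightarrow> nat \<Rightarrow> complex mat" where
  "Sk j A S0 Pi0 0 = S0"
| "Sk j A S0 Pi0 (Suc k) = Sk j A S0 Pi0 k + minv A * Sk j A S0 Pi0 k * minv (adj A)
     + minv A * Pik j A Pi0 k * adj (Pik j A Pi0 k) * minv (adj A)"

definition Ck :: "nat \<Rightarrow> complex mat \<Rightarrow> complex mat \<Rightarrow> complex mat \<Rightarrow> complex mat \<Rightarrow> nat \<Rightarrow> complex mat" where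
  "Ck m j A S0 Pi0 k = 1\<^sub>m m
     + adj (Pik j A Pi0 k) * minv (Sk j A S0 Pi0 k) * Pik j A Pi0 k
     - adj (Pik j A Pi0 (Suc k)) * minv (Sk j A S0 Pi0 (Suc k)) * Pik j A Pi0 (Suc k)"

fun Wk :: "nat \<Rightarrow> complex mat \<Rightarrow> complex mat \<Rightarrow> complex mat \<Rightarrow> complex mat \<Rightarrow> nat \<Rightarrow> complex \<Rightarrow> complex mat" where
  "Wk m j A S0 Pi0 0 z = 1\<^sub>m m"
| "Wk m j A S0 Pi0 (Suc k) z =
     (1\<^sub>m m + (\<i> * z) \<cdot>\<^sub>m (j * Ck m j A S0 Pi0 k)) * Wk m j A S0 Pi0 k z"

definition wA :: "nat \<Rightarrow> nat \<Rightarrow> complex mat \<Rightarrow> complex mat \<Rightarrow> complex mat \<Rightarrow> complex mat \<Rightarrow> nat \<Rightarrow> complex \<Rightarrow> complex mat" where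
  "wA n m j A S0 Pi0 k lam = 1\<^sub>m m
     - \<i> \<cdot>\<^sub>m (j * adj (Pik j A Pi0 k) * minv (Sk j A S0 Pi0 k)
                 * minv (A - lam \<cdot>\<^sub>m 1\<^sub>m n) * Pik j A Pi0 k)"

end

theory Submission
  imports Defs
begin

text \<open>
  The Lyapunov identity \<open>A S - S A\<^sup>* = i \<Pi> j \<Pi>\<^sup>*\<close> is inherited by every step of the
  recursion, so each \<open>S\<^sub>k\<close> is a sum of \<open>S\<^sub>0\<close> and positive semidefinite terms. Expanding
  \<open>C\<^sub>k\<close> with the help of this identity writes it as a sum of three Gram matrices, the last
  of which is positive unless the middle one vanishes; hence \<open>C\<^sub>k > 0\<close>. The same identity
  shows that the transfer functions \<open>w\<^sub>k(\<lambda>) = w\<^sub>A(k,\<lambda>)\<close> intertwine the two pencils,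
  \<open>w\<^sub>k\<^sub>+\<^sub>1(\<lambda>) (\<lambda> - i j) = (\<lambda> - i j C\<^sub>k) w\<^sub>k(\<lambda>)\<close>. Taking \<open>\<lambda> = -1/z\<close> and telescoping gives
  the representation of \<open>W\<^sub>k\<close>; taking \<open>\<lambda> = 0\<close>, where \<open>w\<^sub>k(0)\<close> is \<open>j\<close>-unitary, gives
  \<open>C\<^sub>k j C\<^sub>k = j\<close>.
\<close>

declare assoc_mult_mat[simp del]

section \<open>Adjoints and dimension-free matrix algebra\<close>

lemma dim_adj [simp]: "dim_row (adj A) = dim_col A" "dim_col (adj A) = dim_row A"
  unfolding mat_adjoint_def by auto

lemma index_adj [simp]: "i < dim_col A \<Longrightarrow> j < dim_row A \<Longrightarrow> adj A $$ (i,j) = cnj (A $$ (j,i))"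
  unfolding mat_adjoint_def by (simp add: mat_of_rows_def)

lemma adj_carrier_mat [simp]: "A \<in> carrier_mat n m \<Longrightarrow> adj A \<in> carrier_mat m n"
  by (intro carrier_matI) (simp_all add: carrier_matD)

lemma adj_adj [simp]: "adj (adj A) = A"
  by (rule eq_matI) auto

lemma adj_one [simp]: "adj (1\<^sub>m n) = 1\<^sub>m n"
  by (rule eq_matI) auto

lemma adj_mult: "dim_col A = dim_row B \<Longrightarrow> adj (A * B) = adj B * adj A"
  by (rule eq_matI) (auto simp: scalar_prod_def intro: sum.cong)

lemma adj_add: "dim_row A = dim_row B \<Longrightarrow> dim_col A = dim_col B \<Longrightarrow> adj (A + B) = adj A + adj B"
  by (rule eq_matI) auto

lemma adj_minus: "dim_row A = dim_row B \<Longrightarrow> dim_col A = dim_col B \<Longrightarrow> adj (A - B) = adj A - adj B"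
  by (rule eq_matI) auto

lemma adj_smult [simp]: "adj (c \<cdot>\<^sub>m A) = cnj c \<cdot>\<^sub>m adj A"
  by (rule eq_matI) auto

text \<open>
  The ring laws of the matrix library are stated for carriers; these variants only ask for
  matching dimensions, which the simplifier can establish on its own.
\<close>

context
  fixes A B C :: "complex mat"
begin

lemma assoc_mult_mat_dims: "dim_col A = dim_row B \<Longrightarrow> dim_col B = dim_row C \<Longrightarrow> A * B * C = A * (B * C)"
  by (rule assoc_mult_mat[of A "dim_row A" "dim_col A" B "dim_col B" C "dim_col C"])
     (auto intro: carrier_matI)

lemma mult_add_distrib_mat_dims: "dim_col A = dim_row B \<Longrightarrow> dim_row B = dim_row C \<Longrightarrow>
    dim_col B = dim_col C \<Longrightarrow> A * (B + C) = A * B + A * C"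
  by (rule mult_add_distrib_mat[of A "dim_row A" "dim_col A" B "dim_col B"])
     (auto intro: carrier_matI)

lemma add_mult_distrib_mat_dims: "dim_row B = dim_row C \<Longrightarrow> dim_col B = dim_col C \<Longrightarrow>
    dim_col B = dim_row A \<Longrightarrow> (B + C) * A = B * A + C * A"
  by (rule add_mult_distrib_mat[of B "dim_row B" "dim_col B" C A "dim_col A"])
     (auto intro: carrier_matI)

lemma mult_minus_distrib_mat_dims: "dim_col A = dim_row B \<Longrightarrow> dim_row B = dim_row C \<Longrightarrow>
    dim_col B = dim_col C \<Longrightarrow> A * (B - C) = A * B - A * C"
  by (rule mult_minus_distrib_mat[of A "dim_row A" "dim_col A" B "dim_col B"])
     (auto intro: carrier_matI)

lemma minus_mult_distrib_mat_dims: "dim_row B = dim_row C \<Longrightarrow> dim_col B = dim_col C \<Longrightarrow>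
    dim_col B = dim_row A \<Longrightarrow> (B - C) * A = B * A - C * A"
  by (rule minus_mult_distrib_mat[of B "dim_row B" "dim_col B" C A "dim_col A"])
     (auto intro: carrier_matI)

lemma mult_smult_distrib_dims: "dim_col A = dim_row B \<Longrightarrow> A * (c \<cdot>\<^sub>m B) = c \<cdot>\<^sub>m (A * B)"
  by (rule mult_smult_distrib[of A "dim_row A" "dim_col A" B "dim_col B"])
     (auto intro: carrier_matI)

lemma mult_smult_assoc_mat_dims: "dim_col A = dim_row B \<Longrightarrow> (c \<cdot>\<^sub>m A) * B = c \<cdot>\<^sub>m (A * B)"
  by (rule mult_smult_assoc_mat[of A "dim_row A" "dim_col A" B "dim_col B"])
     (auto intro: carrier_matI)

lemma smult_smult_mat [simp]: "c \<cdot>\<^sub>m (d \<cdot>\<^sub>m A) = (c * d) \<cdot>\<^sub>m A"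
  by (rule eq_matI) (auto simp: mult.assoc)

lemma eq_of_minus_eq_zero_mat: "A - B = 0\<^sub>m (dim_row B) (dim_col B) \<Longrightarrow>
    dim_row A = dim_row B \<Longrightarrow> dim_col A = dim_col B \<Longrightarrow> A = B"
proof (rule eq_matI)
  fix i j assume "A - B = 0\<^sub>m (dim_row B) (dim_col B)" "i < dim_row B" "j < dim_col B"
  then show "A $$ (i,j) = B $$ (i,j)" by (metis index_minus_mat(1) index_zero_mat(1) eq_iff_diff_eq_0)
qed

lemma eq_add_of_minus_eq_mat: "B - C = A \<Longrightarrow> dim_row B = dim_row A \<Longrightarrow> dim_col B = dim_col A \<Longrightarrow>
    dim_row C = dim_row A \<Longrightarrow> dim_col C = dim_col A \<Longrightarrow> B = A + C"
proof (rule eq_matI)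
  fix i j assume e: "B - C = A" and ij: "i < dim_row (A + C)" "j < dim_col (A + C)"
    and dims: "dim_row C = dim_row A" "dim_col C = dim_col A"
  have "B $$ (i,j) - C $$ (i,j) = A $$ (i,j)"
    using arg_cong[OF e, of "\<lambda>M. M $$ (i,j)"] ij dims by simp
  then show "B $$ (i,j) = (A + C) $$ (i,j)" using ij by (simp add: algebra_simps)
qed simp_all

end

text \<open>
  With \<open>mat_ring_simps\<close> a matrix expression becomes a signed sum of right-nested
  products; an identity between such sums is then closed by
  \<open>rule eq_matI; simp del: index_mult_mat(1) add: algebra_simps\<close>, which treats the
  entries of the products as atoms and checks an identity of abelian groups.
\<close>
lemmas mat_ring_simps = assoc_mult_mat_dims mult_add_distrib_mat_dims add_mult_distrib_mat_dims
  mult_minus_distrib_mat_dims minus_mult_distrib_mat_dims mult_smult_distrib_dims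
  mult_smult_assoc_mat_dims adj_mult adj_add adj_minus

lemma pow_mat_Suc_left: "X \<in> carrier_mat n n \<Longrightarrow> X ^\<^sub>m Suc k = X * X ^\<^sub>m k"
proof (induction k)
  case (Suc k)
  have "X * X ^\<^sub>m Suc k = (X * X ^\<^sub>m k) * X"
    using Suc.prems by (simp add: assoc_mult_mat[of _ n n _ n _ n])
  then show ?case using Suc by simp
qed (simp add: carrier_matD)

lemma
  assumes A: "A \<in> carrier_mat n n" and "invertible_mat A"
  shows minv_carrier_mat: "minv A \<in> carrier_mat n n"
    and mult_minv: "A * minv A = 1\<^sub>m n"
    and minv_mult: "minv A * A = 1\<^sub>m n"
proof -
  have "\<exists>B. inverts_mat A B \<and> inverts_mat B A"
    using assms unfolding invertible_mat_def by blast
  then have h: "inverts_mat A (minv A) \<and> inverts_mat (minv A) A"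
    unfolding minv_def by (rule someI_ex)
  then have right: "A * minv A = 1\<^sub>m n" and left: "minv A * A = 1\<^sub>m (dim_row (minv A))"
    using A unfolding inverts_mat_def by (simp_all add: carrier_matD)
  have "dim_col (minv A) = n" using arg_cong[OF right, of dim_col] by simp
  moreover have "dim_row (minv A) = n" using arg_cong[OF left, of dim_col] A by (simp add: carrier_matD)
  ultimately show "minv A \<in> carrier_mat n n" "A * minv A = 1\<^sub>m n" "minv A * A = 1\<^sub>m n"
    using right left by auto
qed

lemma
  assumes A: "A \<in> carrier_mat n n" and B: "B \<in> carrier_mat n n" and AB: "A * B = 1\<^sub>m n"
  shows invertible_of_right_inverse: "invertible_mat A"
    and minv_eqI: "minv A = B"
proof -
  have BA: "B * A = 1\<^sub>m n" using mat_mult_left_right_inverse[OF A B AB] .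
  show inv: "invertible_mat A"
    unfolding invertible_mat_def inverts_mat_def using A B AB BA by auto
  have "minv A = minv A * (A * B)" using AB minv_carrier_mat[OF A inv] by simp
  also have "\<dots> = (minv A * A) * B" using minv_carrier_mat[OF A inv] A B by (simp add: assoc_mult_mat)
  also have "\<dots> = B" using minv_mult[OF A inv] B by simp
  finally show "minv A = B" .
qed

lemma minv_adj: assumes A: "A \<in> carrier_mat n n" and inv: "invertible_mat A"
  shows "minv (adj A) = adj (minv A)"
proof (rule minv_eqI)
  show "adj A * adj (minv A) = 1\<^sub>m n"
    using arg_cong[OF minv_mult[OF A inv], of adj] minv_carrier_mat[OF A inv] A
    by (simp add: adj_mult carrier_matD)
qed (use A minv_carrier_mat[OF A inv] in auto)

lemma j_unitary_adj:
  assumes w: "w \<in> carrier_mat m m" and j: "j \<in> carrier_mat m m" and jj: "j * j = 1\<^sub>m m"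
    and h: "adj w * j * w = j"
  shows "w * j * adj w = j"
proof -
  have c: "adj w * j \<in> carrier_mat m m" "w * j \<in> carrier_mat m m" using w j by auto
  have "(adj w * j) * (w * j) = (adj w * j * w) * j"
    using w j by (simp add: assoc_mult_mat_dims carrier_matD)
  then have "(adj w * j) * (w * j) = 1\<^sub>m m" unfolding h jj .
  then have "(w * j) * (adj w * j) * j = j" using mat_mult_left_right_inverse[OF c] j by simp
  then show ?thesis using w j jj by (simp add: assoc_mult_mat_dims carrier_matD)
qed

section \<open>Quadratic forms and positive definite matrices\<close>

lemma scalar_prod_adj:
  assumes M: "M \<in> carrier_mat a b" and w: "w \<in> carrier_vec b" and v: "v \<in> carrier_vec a"
  shows "(M *\<^sub>v w) \<bullet>c v = w \<bullet>c (adj M *\<^sub>v v)"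
proof -
  have "(M *\<^sub>v w) \<bullet>c v = (\<Sum>i<a. \<Sum>k<b. M $$ (i,k) * w $ k * cnj (v $ i))"
    using M w v by (simp add: scalar_prod_def sum_distrib_right carrier_matD carrier_vecD
        lessThan_atLeast0 row_def)
  also have "\<dots> = (\<Sum>k<b. \<Sum>i<a. M $$ (i,k) * w $ k * cnj (v $ i))"
    by (rule sum.swap)
  also have "\<dots> = w \<bullet>c (adj M *\<^sub>v v)"
    using M w v by (simp add: scalar_prod_def sum_distrib_left carrier_matD carrier_vecD
        lessThan_atLeast0 row_def mult_ac)
  finally show ?thesis .
qed

lemma mult_mat_vec_zero [simp]: "A *\<^sub>v 0\<^sub>v (dim_col A) = 0\<^sub>v (dim_row A)"
  by (rule eq_vecI) (auto simp: scalar_prod_def)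

lemma smult_mat_mult_vec: "dim_vec v = dim_col A \<Longrightarrow> (c \<cdot>\<^sub>m (A :: complex mat)) *\<^sub>v v = c \<cdot>\<^sub>v (A *\<^sub>v v)"
  by (rule eq_vecI) (auto simp: scalar_prod_def sum_distrib_left mult.assoc)

lemma scalar_prod_i_smult: "(\<i> \<cdot>\<^sub>v (w :: complex vec)) \<bullet>c (\<i> \<cdot>\<^sub>v w) = w \<bullet>c w"
  unfolding conjugate_smult_vec by (simp add: mult.assoc[symmetric])

lemma quadratic_form_congruence:
  assumes X: "X \<in> carrier_mat b a" and B: "B \<in> carrier_mat b b" and v: "v \<in> carrier_vec a"
  shows "((adj X * (B * X)) *\<^sub>v v) \<bullet>c v = (B *\<^sub>v (X *\<^sub>v v)) \<bullet>c (X *\<^sub>v v)"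
proof -
  have "(adj X * (B * X)) *\<^sub>v v = adj X *\<^sub>v ((B * X) *\<^sub>v v)"
    by (rule assoc_mult_mat_vec[of _ a b _ a]) (use X B v in auto)
  also have "(B * X) *\<^sub>v v = B *\<^sub>v (X *\<^sub>v v)"
    by (rule assoc_mult_mat_vec[of _ b b _ a]) (use X B v in auto)
  finally show ?thesis
    using scalar_prod_adj[OF adj_carrier_mat[OF X] _ v, of "B *\<^sub>v (X *\<^sub>v v)"] X B v by simp
qed

lemma quadratic_form_gram:
  assumes X: "X \<in> carrier_mat b a" and v: "v \<in> carrier_vec a"
  shows "((adj X * X) *\<^sub>v v) \<bullet>c v = (X *\<^sub>v v) \<bullet>c (X *\<^sub>v v)"
proof -
  have "(adj X * X) *\<^sub>v v = adj X *\<^sub>v (X *\<^sub>v v)"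
    using X v by (simp add: assoc_mult_mat_vec[of _ a b _ a])
  then show ?thesis using scalar_prod_adj[OF adj_carrier_mat[OF X] _ v, of "X *\<^sub>v v"] X v by simp
qed

lemma quadratic_form_add3:
  assumes "X \<in> carrier_mat n n" "Y \<in> carrier_mat n n" "Z \<in> carrier_mat n n" "v \<in> carrier_vec n"
  shows "((X + Y + Z) *\<^sub>v v) \<bullet>c v = (X *\<^sub>v v) \<bullet>c v + (Y *\<^sub>v v) \<bullet>c v + (Z *\<^sub>v v) \<bullet>c v"
  using assms by (simp add: add_mult_distrib_mat_vec[of _ n n] add_scalar_prod_distrib[of _ n])

lemma pos_def_mat_iff: "pos_def_mat n S \<longleftrightarrow> S \<in> carrier_mat n n \<and> adj S = S \<and>
   (\<forall>v\<in>carrier_vec n. v \<noteq> 0\<^sub>v n \<longrightarrow> (S *\<^sub>v v) \<bullet>c v > 0)"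
  unfolding pos_def_mat_def less_complex_def by auto

lemma pos_def_mat_pos: "pos_def_mat n S \<Longrightarrow> v \<in> carrier_vec n \<Longrightarrow> v \<noteq> 0\<^sub>v n \<Longrightarrow> (S *\<^sub>v v) \<bullet>c v > 0"
  unfolding pos_def_mat_iff by auto

lemma pos_def_mat_nonneg: "pos_def_mat n S \<Longrightarrow> v \<in> carrier_vec n \<Longrightarrow> (S *\<^sub>v v) \<bullet>c v \<ge> 0"
  by (cases "v = 0\<^sub>v n") (auto simp: pos_def_mat_iff carrier_matD dest: pos_def_mat_pos[of n S v])

lemma pos_def_mat_invertible: assumes pd: "pos_def_mat n S" shows "invertible_mat S"
proof -
  have S: "S \<in> carrier_mat n n" using pd unfolding pos_def_mat_iff by auto
  have "det S \<noteq> 0"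
  proof
    assume "det S = 0"
    then obtain v where v: "v \<in> carrier_vec n" "v \<noteq> 0\<^sub>v n" "S *\<^sub>v v = 0\<^sub>v n"
      using det_0_iff_vec_prod_zero_field[OF S] by auto
    then show False using pos_def_mat_pos[OF pd v(1,2)] by simp
  qed
  then obtain B where "B \<in> carrier_mat n n" "S * B = 1\<^sub>m n"
    using det_non_zero_imp_unit[OF S, of "()"] unfolding Units_def ring_mat_def by auto
  then show ?thesis using invertible_of_right_inverse[OF S] by blast
qed

lemma pos_def_mat_minv_hermitian: assumes pd: "pos_def_mat n S" shows "adj (minv S) = minv S"
proof -
  have "S \<in> carrier_mat n n" "adj S = S" using pd unfolding pos_def_mat_iff by auto
  then show ?thesis using minv_adj[OF _ pos_def_mat_invertible[OF pd]] by metis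
qed

section \<open>One step of the recursion\<close>

locale admissible_data =
  fixes n m :: nat and A S P j :: "complex mat"
  assumes A_carrier: "A \<in> carrier_mat n n" and A_invertible: "invertible_mat A"
    and S_pos_def: "pos_def_mat n S" and P_carrier: "P \<in> carrier_mat n m"
    and j_carrier: "j \<in> carrier_mat m m" and j_hermitian: "adj j = j" and j_involution: "j * j = 1\<^sub>m m"
    and lyapunov: "A * S - S * adj A = \<i> \<cdot>\<^sub>m (P * j * adj P)"
begin

definition "Ai = minv A"
definition "Si = minv S"
definition "P' = P + \<i> \<cdot>\<^sub>m (Ai * P * j)"
definition "S' = S + Ai * S * minv (adj A) + Ai * P * adj P * minv (adj A)"
definition "Si' = minv S'"
definition "C = 1\<^sub>m m + adj P * Si * P - adj P' * Si' * P'"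

lemma S_carrier: "S \<in> carrier_mat n n" and S_hermitian: "adj S = S"
  using S_pos_def unfolding pos_def_mat_def by auto

lemma Ai_carrier: "Ai \<in> carrier_mat n n"
  unfolding Ai_def using minv_carrier_mat[OF A_carrier A_invertible] .

lemma dims [simp]: "dim_row A = n" "dim_col A = n" "dim_row S = n" "dim_col S = n"
  "dim_row P = n" "dim_col P = m" "dim_row j = m" "dim_col j = m" "dim_row Ai = n" "dim_col Ai = n"
  using A_carrier S_carrier P_carrier j_carrier Ai_carrier by (auto simp: carrier_matD)

lemma A_Ai: "A * Ai = 1\<^sub>m n" and Ai_A: "Ai * A = 1\<^sub>m n"
  unfolding Ai_def using mult_minv[OF A_carrier A_invertible] minv_mult[OF A_carrier A_invertible] .

lemma adj_Ai_adj_A: "adj Ai * adj A = 1\<^sub>m n" and adj_A_adj_Ai: "adj A * adj Ai = 1\<^sub>m n"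
  using arg_cong[OF A_Ai, of adj] arg_cong[OF Ai_A, of adj] by (auto simp: adj_mult)

lemmas inverse_simps [simp] = A_Ai Ai_A adj_Ai_adj_A adj_A_adj_Ai j_involution j_hermitian S_hermitian

lemma inverse_cancel [simp]: "dim_row Z = n \<Longrightarrow> A * (Ai * Z) = Z" "dim_row Z = n \<Longrightarrow> Ai * (A * Z) = Z"
  "dim_row Z = n \<Longrightarrow> adj Ai * (adj A * Z) = Z" "dim_row Z = n \<Longrightarrow> adj A * (adj Ai * Z) = Z"
  "dim_row Z = m \<Longrightarrow> j * (j * Z) = Z"
  by (simp_all add: assoc_mult_mat_dims[symmetric])

lemma minv_adj_A: "minv (adj A) = adj Ai"
  by (rule minv_eqI[of _ n]) (use A_carrier Ai_carrier in auto)

lemma P'_alt: "P' = P + \<i> \<cdot>\<^sub>m (Ai * (P * j))"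
  unfolding P'_def by (simp add: assoc_mult_mat_dims)

lemma S'_alt: "S' = S + Ai * (S * adj Ai) + Ai * (P * (adj P * adj Ai))"
  unfolding S'_def minv_adj_A by (simp add: assoc_mult_mat_dims)

lemma dims_next [simp]: "dim_row P' = n" "dim_col P' = m" "dim_row S' = n" "dim_col S' = n"
  unfolding P'_alt S'_alt by simp_all

lemma S'_carrier: "S' \<in> carrier_mat n n"
  by auto

lemma lyapunov_A_S: "A * S = S * adj A + \<i> \<cdot>\<^sub>m (P * (j * adj P))"
proof -
  have "A * S = (A * S - S * adj A) + S * adj A"
    by (rule eq_matI) simp_all
  also have "\<dots> = S * adj A + \<i> \<cdot>\<^sub>m (P * (j * adj P))"
    unfolding lyapunov by (rule eq_matI) (simp_all add: assoc_mult_mat_dims)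
  finally show ?thesis .
qed

lemma S_adj_A: "S * adj A = A * S - \<i> \<cdot>\<^sub>m (P * (j * adj P))"
  unfolding lyapunov_A_S by (rule eq_matI) simp_all

lemma lyapunov_Ai_S: "Ai * S = S * adj Ai - \<i> \<cdot>\<^sub>m (Ai * (P * (j * (adj P * adj Ai))))"
proof -
  have "Ai * S = Ai * ((S * adj A) * adj Ai)" by (simp add: assoc_mult_mat_dims)
  also have "\<dots> = S * adj Ai - \<i> \<cdot>\<^sub>m (Ai * (P * (j * (adj P * adj Ai))))"
    unfolding S_adj_A by (simp add: mat_ring_simps)
  finally show ?thesis .
qed

lemma lyapunov_A_S_mult:
  "dim_row Z = n \<Longrightarrow> A * (S * Z) = S * (adj A * Z) + \<i> \<cdot>\<^sub>m (P * (j * (adj P * Z)))"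
  using lyapunov_A_S
  by (simp add: assoc_mult_mat_dims[symmetric] add_mult_distrib_mat_dims mult_smult_assoc_mat_dims)

lemma S_adj_A_mult:
  "dim_row Z = n \<Longrightarrow> S * (adj A * Z) = A * (S * Z) - \<i> \<cdot>\<^sub>m (P * (j * (adj P * Z)))"
  using S_adj_A
  by (simp add: assoc_mult_mat_dims[symmetric] minus_mult_distrib_mat_dims mult_smult_assoc_mat_dims)

lemma lyapunov_Ai_S_mult: "dim_row Z = n \<Longrightarrow>
    Ai * (S * Z) = S * (adj Ai * Z) - \<i> \<cdot>\<^sub>m (Ai * (P * (j * (adj P * (adj Ai * Z)))))"
  using lyapunov_Ai_S
  by (simp add: assoc_mult_mat_dims[symmetric] minus_mult_distrib_mat_dims mult_smult_assoc_mat_dims)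

lemma lyapunov_next: "A * S' - S' * adj A = \<i> \<cdot>\<^sub>m (P' * j * adj P')"
  unfolding S'_alt P'_alt
  by (simp add: mat_ring_simps lyapunov_A_S lyapunov_Ai_S lyapunov_A_S_mult
      lyapunov_Ai_S_mult)
    (rule eq_matI; simp del: index_mult_mat(1) add: algebra_simps)

lemma S'_hermitian: "adj S' = S'"
  unfolding S'_alt by (simp add: mat_ring_simps)

lemma quadratic_form_congruence_nonneg: "E \<in> carrier_mat n k \<Longrightarrow> v \<in> carrier_vec k \<Longrightarrow>
    ((adj E * (S * E)) *\<^sub>v v) \<bullet>c v \<ge> 0"
  using quadratic_form_congruence[OF _ S_carrier] pos_def_mat_nonneg[OF S_pos_def] by simp

lemma S'_pos_def: "pos_def_mat n S'"
  unfolding pos_def_mat_iff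
proof (intro conjI ballI impI)
  show "S' \<in> carrier_mat n n" "adj S' = S'" by (auto simp: S'_hermitian)
  fix v :: "complex vec" assume v: "v \<in> carrier_vec n" and v0: "v \<noteq> 0\<^sub>v n"
  have AiP: "adj (Ai * P) \<in> carrier_mat m n" by auto
  have "(S' *\<^sub>v v) \<bullet>c v = (S *\<^sub>v v) \<bullet>c v + ((adj (adj Ai) * (S * adj Ai)) *\<^sub>v v) \<bullet>c v
      + ((adj (adj (Ai * P)) * adj (Ai * P)) *\<^sub>v v) \<bullet>c v"
    unfolding S'_alt using v
    by (subst quadratic_form_add3[of _ n]) (auto simp: mat_ring_simps)
  moreover have "(S *\<^sub>v v) \<bullet>c v > 0" using pos_def_mat_pos[OF S_pos_def v v0] .
  moreover have "((adj (adj Ai) * (S * adj Ai)) *\<^sub>v v) \<bullet>c v \<ge> 0"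
    using quadratic_form_congruence_nonneg[of "adj Ai" n v] Ai_carrier v by simp
  moreover have "((adj (adj (Ai * P)) * adj (Ai * P)) *\<^sub>v v) \<bullet>c v \<ge> 0"
    unfolding quadratic_form_gram[OF AiP v] by (rule conjugate_square_ge_0_vec)
  ultimately show "(S' *\<^sub>v v) \<bullet>c v > 0" by (metis add_pos_nonneg)
qed

lemma admissible_data_next: "admissible_data n m A S' P' j"
  by (rule admissible_data.intro[OF A_carrier A_invertible S'_pos_def _ j_carrier j_hermitian
        j_involution lyapunov_next]) auto

lemma Si_carrier: "Si \<in> carrier_mat n n" and S_Si: "S * Si = 1\<^sub>m n" and Si_S: "Si * S = 1\<^sub>m n"
  and Si_hermitian: "adj Si = Si"
  unfolding Si_def using S_carrier pos_def_mat_invertible[OF S_pos_def]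
  by (auto intro: minv_carrier_mat mult_minv minv_mult pos_def_mat_minv_hermitian[OF S_pos_def])

lemma Si'_carrier: "Si' \<in> carrier_mat n n" and S'_Si': "S' * Si' = 1\<^sub>m n" and Si'_S': "Si' * S' = 1\<^sub>m n"
  and Si'_hermitian: "adj Si' = Si'"
  unfolding Si'_def using S'_carrier pos_def_mat_invertible[OF S'_pos_def]
  by (auto intro: minv_carrier_mat mult_minv minv_mult pos_def_mat_minv_hermitian[OF S'_pos_def])

lemma dims_Si [simp]: "dim_row Si = n" "dim_col Si = n" "dim_row Si' = n" "dim_col Si' = n"
  using Si_carrier Si'_carrier by (auto simp: carrier_matD)

lemmas inverse_S_simps [simp] = S_Si Si_S Si_hermitian S'_Si' Si'_S' Si'_hermitian S'_hermitian

lemma inverse_S_cancel [simp]: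
  "dim_row Z = n \<Longrightarrow> S * (Si * Z) = Z" "dim_row Z = n \<Longrightarrow> Si * (S * Z) = Z"
  "dim_row Z = n \<Longrightarrow> S' * (Si' * Z) = Z" "dim_row Z = n \<Longrightarrow> Si' * (S' * Z) = Z"
  by (simp_all add: assoc_mult_mat_dims[symmetric])

lemma Ai_S_adj_Ai_mult: "dim_row Z = n \<Longrightarrow>
    Ai * (S * (adj Ai * Z)) = S' * Z - S * Z - Ai * (P * (adj P * (adj Ai * Z)))"
  unfolding S'_alt
  by (simp add: mat_ring_simps) (rule eq_matI; simp del: index_mult_mat(1) add: algebra_simps)

lemma dims_C [simp]: "dim_row C = m" "dim_col C = m"
  unfolding C_def by simp_all

lemma C_hermitian: "adj C = C"
  unfolding C_def by (simp add: mat_ring_simps)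

text \<open>Completing squares with the recursion for \<open>S'\<close> turns \<open>C\<close> into a sum of Gram matrices.\<close>
lemma C_gram:
  defines "E\<^sub>1 \<equiv> Si * P - Si' * P'" and "E\<^sub>2 \<equiv> adj Ai * (Si' * P')"
    and "E\<^sub>3 \<equiv> \<i> \<cdot>\<^sub>m j - adj P * (adj Ai * (Si' * P'))"
  shows "C = adj E\<^sub>1 * (S * E\<^sub>1) + adj E\<^sub>2 * (S * E\<^sub>2) + adj E\<^sub>3 * E\<^sub>3"
  unfolding C_def E\<^sub>1_def E\<^sub>2_def E\<^sub>3_def P'_alt
  by (simp add: mat_ring_simps Ai_S_adj_Ai_mult)
    (rule eq_matI; simp del: index_mult_mat(1) add: algebra_simps)

lemma C_pos_def: "pos_def_mat m C"
  unfolding pos_def_mat_iff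
proof (intro conjI ballI impI)
  show "C \<in> carrier_mat m m" by auto
  show "adj C = C" by (rule C_hermitian)
  fix v :: "complex vec" assume v: "v \<in> carrier_vec m" and v0: "v \<noteq> 0\<^sub>v m"
  define E\<^sub>1 E\<^sub>2 E\<^sub>3 where "E\<^sub>1 = Si * P - Si' * P'" and "E\<^sub>2 = adj Ai * (Si' * P')"
    and "E\<^sub>3 = \<i> \<cdot>\<^sub>m j - adj P * (adj Ai * (Si' * P'))"
  have E: "E\<^sub>1 \<in> carrier_mat n m" "E\<^sub>2 \<in> carrier_mat n m" "E\<^sub>3 \<in> carrier_mat m m"
    unfolding E\<^sub>1_def E\<^sub>2_def E\<^sub>3_def by auto
  have "(C *\<^sub>v v) \<bullet>c v = (S *\<^sub>v (E\<^sub>1 *\<^sub>v v)) \<bullet>c (E\<^sub>1 *\<^sub>v v) + (S *\<^sub>v (E\<^sub>2 *\<^sub>v v)) \<bullet>c (E\<^sub>2 *\<^sub>v v)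
      + (E\<^sub>3 *\<^sub>v v) \<bullet>c (E\<^sub>3 *\<^sub>v v)"
    unfolding C_gram[folded E\<^sub>1_def E\<^sub>2_def E\<^sub>3_def] using E v
    by (subst quadratic_form_add3[of _ m])
      (auto simp: quadratic_form_congruence[OF _ S_carrier] quadratic_form_gram)
  moreover have "(S *\<^sub>v (E\<^sub>1 *\<^sub>v v)) \<bullet>c (E\<^sub>1 *\<^sub>v v) \<ge> 0" "(S *\<^sub>v (E\<^sub>2 *\<^sub>v v)) \<bullet>c (E\<^sub>2 *\<^sub>v v) \<ge> 0"
    using E v by (auto intro: pos_def_mat_nonneg[OF S_pos_def])
  moreover have "(S *\<^sub>v (E\<^sub>2 *\<^sub>v v)) \<bullet>c (E\<^sub>2 *\<^sub>v v) > 0 \<or> (E\<^sub>3 *\<^sub>v v) \<bullet>c (E\<^sub>3 *\<^sub>v v) > 0"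
  proof (cases "E\<^sub>2 *\<^sub>v v = 0\<^sub>v n")
    case True
    have "E\<^sub>3 *\<^sub>v v = (\<i> \<cdot>\<^sub>m j) *\<^sub>v v - (adj P * E\<^sub>2) *\<^sub>v v"
      unfolding E\<^sub>3_def E\<^sub>2_def[symmetric] using E v by (intro minus_mult_distrib_mat_vec) auto
    also have "\<dots> = \<i> \<cdot>\<^sub>v (j *\<^sub>v v) - adj P *\<^sub>v (E\<^sub>2 *\<^sub>v v)"
      using E v P_carrier by (simp add: smult_mat_mult_vec assoc_mult_mat_vec[of _ m n _ m])
    also have "\<dots> = \<i> \<cdot>\<^sub>v (j *\<^sub>v v)"
      unfolding True using v P_carrier j_carrier mult_mat_vec_zero[of "adj P"] by simp
    finally have E\<^sub>3v: "E\<^sub>3 *\<^sub>v v = \<i> \<cdot>\<^sub>v (j *\<^sub>v v)" .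
    have "j *\<^sub>v (j *\<^sub>v v) = v"
      using v j_carrier by (simp add: assoc_mult_mat_vec[of _ m m _ m, symmetric])
    then have "j *\<^sub>v v \<noteq> 0\<^sub>v m" using v0 mult_mat_vec_zero[of j] by auto
    then have "(j *\<^sub>v v) \<bullet>c (j *\<^sub>v v) > 0"
      using conjugate_square_greater_0_vec[of "j *\<^sub>v v" m] v j_carrier by simp
    then show ?thesis unfolding E\<^sub>3v scalar_prod_i_smult by simp
  qed (use E v in \<open>auto intro: pos_def_mat_pos[OF S_pos_def]\<close>)
  moreover have "(E\<^sub>3 *\<^sub>v v) \<bullet>c (E\<^sub>3 *\<^sub>v v) \<ge> 0" by (rule conjugate_square_ge_0_vec)
  ultimately show "(C *\<^sub>v v) \<bullet>c v > 0" by (metis add_nonneg_nonneg add_nonneg_pos add_pos_nonneg)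
qed

lemma lyapunov_Si: "Si * A - adj A * Si = \<i> \<cdot>\<^sub>m (Si * (P * (j * (adj P * Si))))"
proof -
  have "Si * A - adj A * Si = Si * ((A * S - S * adj A) * Si)"
    by (simp add: mat_ring_simps)
  also have "\<dots> = \<i> \<cdot>\<^sub>m (Si * (P * (j * (adj P * Si))))"
    unfolding lyapunov by (simp add: mat_ring_simps)
  finally show ?thesis .
qed

lemma Si_A_mult: "dim_row Z = n \<Longrightarrow>
    Si * (A * Z) = \<i> \<cdot>\<^sub>m (Si * (P * (j * (adj P * (Si * Z))))) + adj A * (Si * Z)"
proof -
  have "Si * A = \<i> \<cdot>\<^sub>m (Si * (P * (j * (adj P * Si)))) + adj A * Si"
    by (rule eq_add_of_minus_eq_mat[OF lyapunov_Si]) simp_all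
  then show "dim_row Z = n \<Longrightarrow> ?thesis"
    by (simp add: assoc_mult_mat_dims[symmetric] add_mult_distrib_mat_dims mult_smult_assoc_mat_dims)
qed

lemma lyapunov_Si_Ai: "adj Ai * Si - Si * Ai = \<i> \<cdot>\<^sub>m (adj Ai * (Si * (P * (j * (adj P * (Si * Ai))))))"
proof -
  have "adj Ai * Si - Si * Ai = adj Ai * (Si * ((A * S - S * adj A) * (Si * Ai)))"
    by (simp add: mat_ring_simps)
  also have "\<dots> = \<i> \<cdot>\<^sub>m (adj Ai * (Si * (P * (j * (adj P * (Si * Ai))))))"
    unfolding lyapunov by (simp add: mat_ring_simps)
  finally show ?thesis .
qed

text \<open>\<open>w\<^sub>0\<close> is \<open>w\<^sub>A(k, 0)\<close> for the current triple \<open>(A, S, P)\<close>.\<close>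
definition "w\<^sub>0 = 1\<^sub>m m - \<i> \<cdot>\<^sub>m (j * adj P * Si * Ai * P)"

lemma w\<^sub>0_j_unitary: "adj w\<^sub>0 * j * w\<^sub>0 = j"
proof -
  define N where "N = adj P * (Si * (Ai * P))"
  have dims_N [simp]: "dim_row N = m" "dim_col N = m" unfolding N_def by simp_all
  have w\<^sub>0: "w\<^sub>0 = 1\<^sub>m m - \<i> \<cdot>\<^sub>m (j * N)"
    unfolding w\<^sub>0_def N_def by (simp add: mat_ring_simps)
  have "adj N - N = adj P * ((adj Ai * Si - Si * Ai) * P)"
    unfolding N_def
    by (simp add: mat_ring_simps)
  also have "\<dots> = \<i> \<cdot>\<^sub>m (adj N * (j * N))"
    unfolding lyapunov_Si_Ai N_def by (simp add: mat_ring_simps)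
  finally have N_skew: "adj N - N = \<i> \<cdot>\<^sub>m (adj N * (j * N))" .
  have "adj w\<^sub>0 * j * w\<^sub>0 = j + \<i> \<cdot>\<^sub>m (adj N - N) + adj N * (j * N)"
    unfolding w\<^sub>0
    by (simp add: mat_ring_simps) (rule eq_matI; simp del: index_mult_mat(1) add: algebra_simps)
  also have "\<dots> = j"
    unfolding N_skew
    by (simp add: mat_ring_simps) (rule eq_matI; simp del: index_mult_mat(1) add: algebra_simps)
  finally show ?thesis .
qed

end

locale admissible_data_at = admissible_data +
  fixes lam :: complex
  assumes resolvent_invertible: "invertible_mat (A - lam \<cdot>\<^sub>m 1\<^sub>m n)"
begin

definition "Res = minv (A - lam \<cdot>\<^sub>m 1\<^sub>m n)"
definition "w = 1\<^sub>m m - \<i> \<cdot>\<^sub>m (j * adj P * Si * Res * P)"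
definition "w' = 1\<^sub>m m - \<i> \<cdot>\<^sub>m (j * adj P' * Si' * Res * P')"

lemma Res_carrier: "Res \<in> carrier_mat n n"
  and Res_inverse: "(A - lam \<cdot>\<^sub>m 1\<^sub>m n) * Res = 1\<^sub>m n" "Res * (A - lam \<cdot>\<^sub>m 1\<^sub>m n) = 1\<^sub>m n"
proof -
  have "A - lam \<cdot>\<^sub>m 1\<^sub>m n \<in> carrier_mat n n" by auto
  then show "Res \<in> carrier_mat n n" "(A - lam \<cdot>\<^sub>m 1\<^sub>m n) * Res = 1\<^sub>m n" "Res * (A - lam \<cdot>\<^sub>m 1\<^sub>m n) = 1\<^sub>m n"
    unfolding Res_def using resolvent_invertible by (simp_all add: minv_carrier_mat mult_minv minv_mult)
qed

lemma dims_Res [simp]: "dim_row Res = n" "dim_col Res = n"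
  using Res_carrier by (auto simp: carrier_matD)

lemma A_Res: "A * Res = 1\<^sub>m n + lam \<cdot>\<^sub>m Res" and Res_A: "Res * A = 1\<^sub>m n + lam \<cdot>\<^sub>m Res"
proof -
  have "A * Res - lam \<cdot>\<^sub>m Res = 1\<^sub>m n"
    using Res_inverse(1) by (simp add: mat_ring_simps)
  then show "A * Res = 1\<^sub>m n + lam \<cdot>\<^sub>m Res" by (rule eq_add_of_minus_eq_mat) simp_all
  have "Res * A - lam \<cdot>\<^sub>m Res = 1\<^sub>m n"
    using Res_inverse(2) by (simp add: mat_ring_simps)
  then show "Res * A = 1\<^sub>m n + lam \<cdot>\<^sub>m Res" by (rule eq_add_of_minus_eq_mat) simp_all
qed

lemma Res_Ai_commute: "Res * Ai = Ai * Res"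
proof -
  have "Res * Ai = Ai * ((A * Res) * Ai)" by (simp add: assoc_mult_mat_dims)
  also have "\<dots> = Ai * ((Res * A) * Ai)" unfolding A_Res Res_A ..
  also have "\<dots> = Ai * Res" by (simp add: assoc_mult_mat_dims)
  finally show ?thesis .
qed

lemma resolvent_simps: "A * Res = 1\<^sub>m n + lam \<cdot>\<^sub>m Res" "dim_row Z = n \<Longrightarrow> A * (Res * Z) = Z + lam \<cdot>\<^sub>m (Res * Z)"
  "Res * A = 1\<^sub>m n + lam \<cdot>\<^sub>m Res" "dim_row Z = n \<Longrightarrow> Res * (A * Z) = Z + lam \<cdot>\<^sub>m (Res * Z)"
  "Res * Ai = Ai * Res" "dim_row Z = n \<Longrightarrow> Res * (Ai * Z) = Ai * (Res * Z)"
  using A_Res Res_A Res_Ai_commute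
  by (simp_all add: assoc_mult_mat_dims[symmetric] add_mult_distrib_mat_dims mult_smult_assoc_mat_dims)

lemma Res_P_identity: "Res * (A * P) + Res * (Ai * P)
    = S' * (adj A * (Si * (Res * P))) + \<i> \<cdot>\<^sub>m (P' * (j * (adj P * (Si * (Res * P)))))"
  unfolding S'_alt P'_alt
  by (simp add: mat_ring_simps S_adj_A_mult resolvent_simps)
    (rule eq_matI; simp del: index_mult_mat(1) add: algebra_simps)

lemma w_step_identity: "adj P' * (Si' * (A * (Res * P'))) - \<i> \<cdot>\<^sub>m (adj P' * (Si' * (Res * (P' * j))))
    = adj P * (Si * (A * (Res * P))) - \<i> \<cdot>\<^sub>m (C * (j * (adj P * (Si * (Res * P)))))"
proof -
  have "adj P' * (Si' * (A * (Res * P'))) - \<i> \<cdot>\<^sub>m (adj P' * (Si' * (Res * (P' * j))))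
     = adj P' * (Si' * (Res * (A * P) + Res * (Ai * P)))"
    unfolding P'_alt
    by (simp add: mat_ring_simps resolvent_simps)
      (rule eq_matI; simp del: index_mult_mat(1) add: algebra_simps)
  also have "\<dots> = adj P' * (adj A * (Si * (Res * P)))
      + \<i> \<cdot>\<^sub>m (adj P' * (Si' * (P' * (j * (adj P * (Si * (Res * P)))))))"
    unfolding Res_P_identity
    by (simp add: mat_ring_simps)
  also have "\<dots> = adj P * (Si * (A * (Res * P))) - \<i> \<cdot>\<^sub>m (C * (j * (adj P * (Si * (Res * P)))))"
    unfolding C_def P'_alt
    by (simp add: mat_ring_simps Si_A_mult)
      (rule eq_matI; simp del: index_mult_mat(1) add: algebra_simps)
  finally show ?thesis .
qed

lemma w'_intertwines: "w' * (lam \<cdot>\<^sub>m 1\<^sub>m m - \<i> \<cdot>\<^sub>m j) = (lam \<cdot>\<^sub>m 1\<^sub>m m - \<i> \<cdot>\<^sub>m (j * C)) * w"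
proof (rule eq_of_minus_eq_zero_mat)
  have "w' * (lam \<cdot>\<^sub>m 1\<^sub>m m - \<i> \<cdot>\<^sub>m j) - (lam \<cdot>\<^sub>m 1\<^sub>m m - \<i> \<cdot>\<^sub>m (j * C)) * w
    = (- \<i>) \<cdot>\<^sub>m (j * ((adj P' * (Si' * (A * (Res * P'))) - \<i> \<cdot>\<^sub>m (adj P' * (Si' * (Res * (P' * j)))))
       - (adj P * (Si * (A * (Res * P))) - \<i> \<cdot>\<^sub>m (C * (j * (adj P * (Si * (Res * P))))))))"
    unfolding w_def w'_def C_def
    by (simp add: mat_ring_simps resolvent_simps)
      (rule eq_matI; simp del: index_mult_mat(1) add: algebra_simps)
  also have "\<dots> = 0\<^sub>m m m"
    unfolding w_step_identity
    by (simp add: mat_ring_simps) (rule eq_matI; simp del: index_mult_mat(1) add: algebra_simps)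
  finally show "w' * (lam \<cdot>\<^sub>m 1\<^sub>m m - \<i> \<cdot>\<^sub>m j) - (lam \<cdot>\<^sub>m 1\<^sub>m m - \<i> \<cdot>\<^sub>m (j * C)) * w
    = 0\<^sub>m (dim_row ((lam \<cdot>\<^sub>m 1\<^sub>m m - \<i> \<cdot>\<^sub>m (j * C)) * w)) (dim_col ((lam \<cdot>\<^sub>m 1\<^sub>m m - \<i> \<cdot>\<^sub>m (j * C)) * w))"
    by (simp add: w_def)
qed (simp_all add: w_def w'_def)

end

context admissible_data
begin

lemma A_minus_zero: "A - 0 \<cdot>\<^sub>m 1\<^sub>m n = A"
  by (rule eq_matI) simp_all

text \<open>At \<open>\<lambda> = 0\<close> the intertwining relation reads \<open>C w\<^sub>0 = j w\<^sub>0' j\<close>, where both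
  \<open>w\<^sub>0\<close> and the \<open>w\<^sub>0'\<close> of the next step are \<open>j\<close>-unitary.\<close>
lemma C_j_C: "C * j * C = j"
proof -
  interpret at0: admissible_data_at n m A S P j 0
    by unfold_locales (simp add: A_minus_zero A_invertible)
  interpret succ: admissible_data n m A S' P' j by (rule admissible_data_next)
  have Res: "at0.Res = Ai" unfolding at0.Res_def Ai_def A_minus_zero ..
  define w w' where "w = w\<^sub>0" and "w' = succ.w\<^sub>0"
  have dims_w [simp]: "dim_row w = m" "dim_col w = m" "dim_row w' = m" "dim_col w' = m"
    unfolding w_def w'_def w\<^sub>0_def succ.w\<^sub>0_def by simp_all
  have j_unitary: "adj w * j * w = j" "adj w' * j * w' = j"
    unfolding w_def w'_def using w\<^sub>0_j_unitary succ.w\<^sub>0_j_unitary by simp_all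
  have j_unitary': "w * j * adj w = j" "w' * j * adj w' = j"
    using j_unitary by (auto intro!: j_unitary_adj[OF _ j_carrier j_involution])
  have intertwines: "w' * (0 \<cdot>\<^sub>m 1\<^sub>m m - \<i> \<cdot>\<^sub>m j) = (0 \<cdot>\<^sub>m 1\<^sub>m m - \<i> \<cdot>\<^sub>m (j * C)) * w"
    using at0.w'_intertwines
    unfolding w_def w'_def at0.w_def at0.w'_def w\<^sub>0_def succ.w\<^sub>0_def Res succ.Si_def Si'_def
      succ.Ai_def Ai_def .
  have C_w: "C * w = j * (w' * j)"
  proof (rule eq_of_minus_eq_zero_mat)
    have "C * w - j * (w' * j) = (- \<i>) \<cdot>\<^sub>m (j * (w' * (0 \<cdot>\<^sub>m 1\<^sub>m m - \<i> \<cdot>\<^sub>m j))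
        - j * ((0 \<cdot>\<^sub>m 1\<^sub>m m - \<i> \<cdot>\<^sub>m (j * C)) * w))"
      by (simp add: mat_ring_simps) (rule eq_matI; simp del: index_mult_mat(1) add: algebra_simps)
    also have "\<dots> = 0\<^sub>m m m"
      unfolding intertwines
      by (simp add: mat_ring_simps) (rule eq_matI; simp del: index_mult_mat(1) add: algebra_simps)
    finally show "C * w - j * (w' * j) = 0\<^sub>m (dim_row (j * (w' * j))) (dim_col (j * (w' * j)))"
      by simp
  qed simp_all
  have C_eq: "C = j * (w' * (adj w * j))"
  proof -
    have "w * (j * (adj w * j)) = 1\<^sub>m m"
      using j_unitary'(1) by (simp add: assoc_mult_mat_dims[symmetric])
    then have "C = C * (w * (j * (adj w * j)))" by simp
    also have "\<dots> = (C * w) * (j * (adj w * j))" by (simp add: assoc_mult_mat_dims)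
    also have "\<dots> = j * (w' * (adj w * j))" unfolding C_w by (simp add: mat_ring_simps)
    finally show ?thesis .
  qed
  have j_unitary_mult: "dim_row Z = m \<Longrightarrow> adj w * (j * (w * Z)) = j * Z"
    "dim_row Z = m \<Longrightarrow> w' * (j * (adj w' * Z)) = j * Z" for Z
    using j_unitary(1) j_unitary'(2) by (simp_all add: assoc_mult_mat_dims[symmetric])
  have "C * j * C = C * j * adj C" unfolding C_hermitian ..
  also have "\<dots> = (j * (w' * (adj w * j))) * j * adj (j * (w' * (adj w * j)))"
    unfolding C_eq ..
  also have "\<dots> = j" by (simp add: mat_ring_simps j_unitary_mult)
  finally show ?thesis .
qed

end

section \<open>The recursion\<close>

context
  fixes n m :: nat and A S\<^sub>0 \<Pi>\<^sub>0 j :: "complex mat"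
  assumes adm: "admissible_data n m A S\<^sub>0 \<Pi>\<^sub>0 j"
begin

lemma admissible_data_Sk_Pik: "admissible_data n m A (Sk j A S\<^sub>0 \<Pi>\<^sub>0 k) (Pik j A \<Pi>\<^sub>0 k) j"
proof (induction k)
  case (Suc k)
  then interpret admissible_data n m A "Sk j A S\<^sub>0 \<Pi>\<^sub>0 k" "Pik j A \<Pi>\<^sub>0 k" j .
  have "Sk j A S\<^sub>0 \<Pi>\<^sub>0 (Suc k) = S'" "Pik j A \<Pi>\<^sub>0 (Suc k) = P'"
    unfolding S'_def P'_def Ai_def by simp_all
  then show ?case using admissible_data_next by simp
qed (simp add: adm)

lemma Ck_eq_C: "Ck m j A S\<^sub>0 \<Pi>\<^sub>0 k = admissible_data.C m A (Sk j A S\<^sub>0 \<Pi>\<^sub>0 k) (Pik j A \<Pi>\<^sub>0 k) j"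
proof -
  interpret admissible_data n m A "Sk j A S\<^sub>0 \<Pi>\<^sub>0 k" "Pik j A \<Pi>\<^sub>0 k" j
    by (rule admissible_data_Sk_Pik)
  show ?thesis unfolding Ck_def C_def Si_def Si'_def S'_def P'_def Ai_def by simp
qed

lemma Sk_invertible: "invertible_mat (Sk j A S\<^sub>0 \<Pi>\<^sub>0 k)"
  using pos_def_mat_invertible admissible_data.S_pos_def[OF admissible_data_Sk_Pik] .

lemma Ck_pos_def: "pos_def_mat m (Ck m j A S\<^sub>0 \<Pi>\<^sub>0 k)"
  unfolding Ck_eq_C by (rule admissible_data.C_pos_def[OF admissible_data_Sk_Pik])

lemma Ck_j_Ck: "Ck m j A S\<^sub>0 \<Pi>\<^sub>0 k * j * Ck m j A S\<^sub>0 \<Pi>\<^sub>0 k = j"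
  unfolding Ck_eq_C by (rule admissible_data.C_j_C[OF admissible_data_Sk_Pik])

context
  fixes z :: complex
  assumes z: "z \<noteq> 0" and resolvent_invertible: "invertible_mat (A - (- 1 / z) \<cdot>\<^sub>m 1\<^sub>m n)"
begin

lemma wA_step: "(1\<^sub>m m + (\<i> * z) \<cdot>\<^sub>m (j * Ck m j A S\<^sub>0 \<Pi>\<^sub>0 k)) * wA n m j A S\<^sub>0 \<Pi>\<^sub>0 k (- 1 / z)
    = wA n m j A S\<^sub>0 \<Pi>\<^sub>0 (Suc k) (- 1 / z) * (1\<^sub>m m + (\<i> * z) \<cdot>\<^sub>m j)"
proof -
  define lam where "lam = - 1 / z"
  interpret admissible_data_at n m A "Sk j A S\<^sub>0 \<Pi>\<^sub>0 k" "Pik j A \<Pi>\<^sub>0 k" j lam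
    by (rule admissible_data_at.intro[OF admissible_data_Sk_Pik])
      (unfold_locales, use resolvent_invertible in \<open>simp add: lam_def\<close>)
  have wA: "wA n m j A S\<^sub>0 \<Pi>\<^sub>0 k (- 1 / z) = w" "wA n m j A S\<^sub>0 \<Pi>\<^sub>0 (Suc k) (- 1 / z) = w'"
    unfolding wA_def w_def w'_def Si_def Si'_def Res_def S'_def P'_def Ai_def by (simp_all add: lam_def)
  have dims_w [simp]: "dim_row w = m" "dim_col w = m" "dim_row w' = m" "dim_col w' = m"
    unfolding w_def w'_def by simp_all
  have pencil: "1\<^sub>m m + (\<i> * z) \<cdot>\<^sub>m X = (- z) \<cdot>\<^sub>m (lam \<cdot>\<^sub>m 1\<^sub>m m - \<i> \<cdot>\<^sub>m X)"
    if "X \<in> carrier_mat m m" for X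
    using that z unfolding lam_def by (intro eq_matI) (auto simp: field_simps)
  have "(1\<^sub>m m + (\<i> * z) \<cdot>\<^sub>m (j * C)) * w = (- z) \<cdot>\<^sub>m ((lam \<cdot>\<^sub>m 1\<^sub>m m - \<i> \<cdot>\<^sub>m (j * C)) * w)"
    by (subst pencil) (auto simp: mult_smult_assoc_mat_dims)
  also have "\<dots> = (- z) \<cdot>\<^sub>m (w' * (lam \<cdot>\<^sub>m 1\<^sub>m m - \<i> \<cdot>\<^sub>m j))"
    unfolding w'_intertwines ..
  also have "\<dots> = w' * (1\<^sub>m m + (\<i> * z) \<cdot>\<^sub>m j)"
    by (subst pencil[of j]) (auto simp: mult_smult_distrib_dims)
  finally show ?thesis unfolding wA Ck_eq_C .
qed

lemma Wk_eq_wA: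
  assumes w\<^sub>0_invertible: "invertible_mat (wA n m j A S\<^sub>0 \<Pi>\<^sub>0 0 (- 1 / z))"
  shows "Wk m j A S\<^sub>0 \<Pi>\<^sub>0 k z =
    wA n m j A S\<^sub>0 \<Pi>\<^sub>0 k (- 1 / z) * (1\<^sub>m m + (\<i> * z) \<cdot>\<^sub>m j) ^\<^sub>m k * minv (wA n m j A S\<^sub>0 \<Pi>\<^sub>0 0 (- 1 / z))"
proof -
  define w where "w k = wA n m j A S\<^sub>0 \<Pi>\<^sub>0 k (- 1 / z)" for k
  define X where "X = 1\<^sub>m m + (\<i> * z) \<cdot>\<^sub>m j"
  define M where "M k = 1\<^sub>m m + (\<i> * z) \<cdot>\<^sub>m (j * Ck m j A S\<^sub>0 \<Pi>\<^sub>0 k)" for k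
  have j: "j \<in> carrier_mat m m" using admissible_data.j_carrier[OF adm] .
  have X: "X \<in> carrier_mat m m" unfolding X_def using j by auto
  have M: "M k \<in> carrier_mat m m" for k
    unfolding M_def using j Ck_pos_def[of k] by (auto simp: pos_def_mat_iff)
  have w: "w k \<in> carrier_mat m m" for k
    unfolding w_def wA_def using j by (auto simp: admissible_data.dims[OF admissible_data_Sk_Pik])
  have w\<^sub>0_inverse: "w 0 * minv (w 0) = 1\<^sub>m m" and minv_w\<^sub>0: "minv (w 0) \<in> carrier_mat m m"
    using w\<^sub>0_invertible mult_minv[OF w] minv_carrier_mat[OF w] unfolding w_def by auto
  have step: "M k * w k = w (Suc k) * X" for k
    unfolding M_def w_def X_def by (rule wA_step)
  show ?thesis unfolding w_def[symmetric] X_def[symmetric]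
  proof (induction k)
    case 0
    then show ?case using w\<^sub>0_inverse w[of 0] X by simp
  next
    case (Suc k)
    have "Wk m j A S\<^sub>0 \<Pi>\<^sub>0 (Suc k) z = M k * (w k * X ^\<^sub>m k * minv (w 0))"
      using Suc unfolding M_def by simp
    also have "\<dots> = (M k * w k) * (X ^\<^sub>m k * minv (w 0))"
      using M[of k] w[of k] X minv_w\<^sub>0 by (simp add: assoc_mult_mat_dims carrier_matD)
    also have "\<dots> = w (Suc k) * (X * X ^\<^sub>m k) * minv (w 0)"
      unfolding step using w[of "Suc k"] X minv_w\<^sub>0 by (simp add: assoc_mult_mat_dims carrier_matD)
    finally show ?case unfolding pow_mat_Suc_left[OF X] .
  qed
qed

end

end

lemma jmat_carrier: "jmat m\<^sub>1 m\<^sub>2 \<in> carrier_mat (m\<^sub>1 + m\<^sub>2) (m\<^sub>1 + m\<^sub>2)"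
  unfolding jmat_def by simp

lemma jmat_hermitian: "adj (jmat m\<^sub>1 m\<^sub>2) = jmat m\<^sub>1 m\<^sub>2"
  unfolding jmat_def by (rule eq_matI) auto

lemma jmat_involution: "jmat m\<^sub>1 m\<^sub>2 * jmat m\<^sub>1 m\<^sub>2 = 1\<^sub>m (m\<^sub>1 + m\<^sub>2)"
proof (rule eq_matI)
  fix a b assume ab: "a < dim_row (1\<^sub>m (m\<^sub>1 + m\<^sub>2))" "b < dim_col (1\<^sub>m (m\<^sub>1 + m\<^sub>2))"
  have "(jmat m\<^sub>1 m\<^sub>2 * jmat m\<^sub>1 m\<^sub>2) $$ (a,b)
      = (\<Sum>k\<in>{0..<m\<^sub>1 + m\<^sub>2}. (if a = k then (if a < m\<^sub>1 then 1 else -1) else 0) * jmat m\<^sub>1 m\<^sub>2 $$ (k,b))"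
    using ab unfolding jmat_def by (simp add: scalar_prod_def)
  also have "\<dots> = (if a < m\<^sub>1 then 1 else -1) * jmat m\<^sub>1 m\<^sub>2 $$ (a,b)"
    using ab by (simp add: if_distrib[of "\<lambda>x. x * _"] cong: if_cong)
  also have "\<dots> = 1\<^sub>m (m\<^sub>1 + m\<^sub>2) $$ (a,b)" using ab unfolding jmat_def by auto
  finally show "(jmat m\<^sub>1 m\<^sub>2 * jmat m\<^sub>1 m\<^sub>2) $$ (a,b) = 1\<^sub>m (m\<^sub>1 + m\<^sub>2) $$ (a,b)" .
qed (simp_all add: jmat_def)

lemma admissible_imp_admissible_data:
  "admissible n (m\<^sub>1 + m\<^sub>2) (jmat m\<^sub>1 m\<^sub>2) A S\<^sub>0 \<Pi>\<^sub>0 \<Longrightarrow>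
    admissible_data n (m\<^sub>1 + m\<^sub>2) A S\<^sub>0 \<Pi>\<^sub>0 (jmat m\<^sub>1 m\<^sub>2)"
  unfolding admissible_def
  by (intro admissible_data.intro) (simp_all only: jmat_carrier jmat_hermitian jmat_involution)

theorem theorem2p5:
  fixes m1 m2 n :: nat and A S0 Pi0 :: "complex mat"
  assumes "m1 \<ge> 1" and "m2 \<ge> 1"
    and adm: "admissible n (m1 + m2) (jmat m1 m2) A S0 Pi0"
  shows "(\<forall>k. invertible_mat (Sk (jmat m1 m2) A S0 Pi0 k))
    \<and> (\<forall>k. pos_def_mat (m1 + m2) (Ck (m1 + m2) (jmat m1 m2) A S0 Pi0 k))
    \<and> (\<forall>k. Ck (m1 + m2) (jmat m1 m2) A S0 Pi0 k * jmat m1 m2 * Ck (m1 + m2) (jmat m1 m2) A S0 Pi0 k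
               = jmat m1 m2)
    \<and> (\<forall>k z. z \<noteq> 0 \<and> invertible_mat (A - (- 1 / z) \<cdot>\<^sub>m 1\<^sub>m n)
               \<and> invertible_mat (wA n (m1 + m2) (jmat m1 m2) A S0 Pi0 0 (- 1 / z)) \<longrightarrow>
             Wk (m1 + m2) (jmat m1 m2) A S0 Pi0 k z =
               wA n (m1 + m2) (jmat m1 m2) A S0 Pi0 k (- 1 / z)
               * (1\<^sub>m (m1 + m2) + (\<i> * z) \<cdot>\<^sub>m jmat m1 m2) ^\<^sub>m k
               * minv (wA n (m1 + m2) (jmat m1 m2) A S0 Pi0 0 (- 1 / z)))"
proof -
  have data: "admissible_data n (m1 + m2) A S0 Pi0 (jmat m1 m2)"
    using adm by (rule admissible_imp_admissible_data)
  show ?thesis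
    by (intro conjI allI impI Sk_invertible[OF data] Ck_pos_def[OF data] Ck_j_Ck[OF data])
      (elim conjE, rule Wk_eq_wA[OF data])
qed

end
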